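(* Let $M$ be an object of an abelian category $\mathcal A$. Then: (1) $M$ is (strongly) self-Rickart if and only if for every split fully invariant short exact sequence $0\to F\to M\to C\to 0$, $M$ is (strongly) self-$F$-split. (2) $M$ is dual (strongly) self-Rickart if and only if for every split fully invariant short exact sequence $0\to F\to M\to C\to 0$, $M$ is dual (strongly) self-$F$-split.
   Context: Convention: each statement containing parenthetical words holds in two versions: one obtained by deleting all parenthetical words and one obtained by keeping all of them. Let $\mathcal A$ be an abelian category. A morphism $s:X\to Y$ is a section if $ts=1_X$ for some $t$, and a retraction if $st=1_Y$ for some $t$. A monomorphism $i:K\to M$ is fully invariant if for every morphism $h:M\to M$ there is $\alpha:K\to K$ with $hi=i\alpha$; an epimorphism $d:M\to C$ is fully coinvariant if for every $h:M\to M$ there is $\beta:C\to C$ with $dh=\beta d$. A short exact sequence $0\to F\xrightarrow{i}M\xrightarrow{d}C\to 0$ is fully invariant if $i$ is fully invariant. $M$ is (strongly) self-$F$-split if for every morphism $g:M\to M$, $\ker(dg)$ is a (fully invariant) section; $M$ is dual (strongly) self-$F$-split if for every morphism $g:M\to M$, $\mathrm{coker}(gi)$ is a (fully coinvariant) retraction. $M$ is (strongly) self-Rickart if for every morphism $f:M\to M$, $\ker(f)$ is a (fully invariant) section, and dual (strongly) self-Rickart if for every $f:M\to M$, $\mathrm{coker}(f)$ is a (fully coinvariant) retraction. *)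

theory Defs
  imports Main
begin

record ('o, 'm) category =
  Ob  :: "'o set"
  Hom :: "'o \<Rightarrow> 'o \<Rightarrow> 'm set"
  cmp :: "'m \<Rightarrow> 'm \<Rightarrow> 'm"   (* cmp A g f = g \<circ> f *)
  Id  :: "'o \<Rightarrow> 'm"

definition is_category :: "('o, 'm) category \<Rightarrow> bool" where
  "is_category A \<longleftrightarrow>
     (\<forall>a b f. f \<in> Hom A a b \<longrightarrow> a \<in> Ob A \<and> b \<in> Ob A) \<and>
     (\<forall>a b a' b' f. f \<in> Hom A a b \<longrightarrow> f \<in> Hom A a' b' \<longrightarrow> a = a' \<and> b = b') \<and>
     (\<forall>a \<in> Ob A. Id A a \<in> Hom A a a) \<and>
     (\<forall>a b c f g. f \<in> Hom A a b \<longrightarrow> g \<in> Hom A b c \<longrightarrow> cmp A g f \<in> Hom A a c) \<and>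
     (\<forall>a b c d f g h. f \<in> Hom A a b \<longrightarrow> g \<in> Hom A b c \<longrightarrow> h \<in> Hom A c d \<longrightarrow>
         cmp A h (cmp A g f) = cmp A (cmp A h g) f) \<and>
     (\<forall>a b f. f \<in> Hom A a b \<longrightarrow> cmp A (Id A b) f = f \<and> cmp A f (Id A a) = f)"

definition is_zero_obj :: "('o, 'm) category \<Rightarrow> 'o \<Rightarrow> bool" where
  "is_zero_obj A z \<longleftrightarrow> z \<in> Ob A \<and>
     (\<forall>a \<in> Ob A. (\<exists>!f. f \<in> Hom A z a) \<and> (\<exists>!f. f \<in> Hom A a z))"

definition zm :: "('o, 'm) category \<Rightarrow> 'o \<Rightarrow> 'o \<Rightarrow> 'm" where
  "zm A a b = (THE h. h \<in> Hom A a b \<and>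
     (\<exists>z u v. is_zero_obj A z \<and> u \<in> Hom A a z \<and> v \<in> Hom A z b \<and> h = cmp A v u))"

definition mono :: "('o, 'm) category \<Rightarrow> 'o \<Rightarrow> 'o \<Rightarrow> 'm \<Rightarrow> bool" where
  "mono A a b f \<longleftrightarrow> f \<in> Hom A a b \<and>
     (\<forall>x g h. g \<in> Hom A x a \<longrightarrow> h \<in> Hom A x a \<longrightarrow> cmp A f g = cmp A f h \<longrightarrow> g = h)"

definition epi :: "('o, 'm) category \<Rightarrow> 'o \<Rightarrow> 'o \<Rightarrow> 'm \<Rightarrow> bool" where
  "epi A a b f \<longleftrightarrow> f \<in> Hom A a b \<and>
     (\<forall>x g h. g \<in> Hom A b x \<longrightarrow> h \<in> Hom A b x \<longrightarrow> cmp A g f = cmp A h f \<longrightarrow> g = h)"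

definition is_kernel :: "('o, 'm) category \<Rightarrow> 'o \<Rightarrow> 'o \<Rightarrow> 'm \<Rightarrow> 'o \<Rightarrow> 'm \<Rightarrow> bool" where
  "is_kernel A a b f K k \<longleftrightarrow> f \<in> Hom A a b \<and> k \<in> Hom A K a \<and> cmp A f k = zm A K b \<and>
     (\<forall>X g. g \<in> Hom A X a \<longrightarrow> cmp A f g = zm A X b \<longrightarrow> (\<exists>!u. u \<in> Hom A X K \<and> cmp A k u = g))"

definition is_cokernel :: "('o, 'm) category \<Rightarrow> 'o \<Rightarrow> 'o \<Rightarrow> 'm \<Rightarrow> 'o \<Rightarrow> 'm \<Rightarrow> bool" where
  "is_cokernel A a b f Q q \<longleftrightarrow> f \<in> Hom A a b \<and> q \<in> Hom A b Q \<and> cmp A q f = zm A a Q \<and>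
     (\<forall>X g. g \<in> Hom A b X \<longrightarrow> cmp A g f = zm A a X \<longrightarrow> (\<exists>!u. u \<in> Hom A Q X \<and> cmp A u q = g))"

definition has_products :: "('o, 'm) category \<Rightarrow> bool" where
  "has_products A \<longleftrightarrow> (\<forall>a \<in> Ob A. \<forall>b \<in> Ob A. \<exists>P p1 p2. p1 \<in> Hom A P a \<and> p2 \<in> Hom A P b \<and>
     (\<forall>X f g. f \<in> Hom A X a \<longrightarrow> g \<in> Hom A X b \<longrightarrow>
        (\<exists>!u. u \<in> Hom A X P \<and> cmp A p1 u = f \<and> cmp A p2 u = g)))"

definition has_coproducts :: "('o, 'm) category \<Rightarrow> bool" where
  "has_coproducts A \<longleftrightarrow> (\<forall>a \<in> Ob A. \<forall>b \<in> Ob A. \<exists>S j1 j2. j1 \<in> Hom A a S \<and> j2 \<in> Hom A b S \<and>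
     (\<forall>X f g. f \<in> Hom A a X \<longrightarrow> g \<in> Hom A b X \<longrightarrow>
        (\<exists>!u. u \<in> Hom A S X \<and> cmp A u j1 = f \<and> cmp A u j2 = g)))"

text \<open>Abelian category (Freyd's definition): zero object, binary products and coproducts,
  all kernels and cokernels, every monomorphism is a kernel, every epimorphism is a cokernel.\<close>
definition abelian :: "('o, 'm) category \<Rightarrow> bool" where
  "abelian A \<longleftrightarrow> is_category A \<and> (\<exists>z. is_zero_obj A z) \<and> has_products A \<and> has_coproducts A \<and>
     (\<forall>a b f. f \<in> Hom A a b \<longrightarrow> (\<exists>K k. is_kernel A a b f K k) \<and> (\<exists>Q q. is_cokernel A a b f Q q)) \<and>
     (\<forall>a b f. mono A a b f \<longrightarrow> (\<exists>c g. is_kernel A b c g a f)) \<and>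
     (\<forall>a b f. epi A a b f \<longrightarrow> (\<exists>c g. is_cokernel A c a g b f))"

definition is_section :: "('o, 'm) category \<Rightarrow> 'o \<Rightarrow> 'o \<Rightarrow> 'm \<Rightarrow> bool" where
  "is_section A X Y s \<longleftrightarrow> s \<in> Hom A X Y \<and> (\<exists>t. t \<in> Hom A Y X \<and> cmp A t s = Id A X)"

definition is_retraction :: "('o, 'm) category \<Rightarrow> 'o \<Rightarrow> 'o \<Rightarrow> 'm \<Rightarrow> bool" where
  "is_retraction A X Y s \<longleftrightarrow> s \<in> Hom A X Y \<and> (\<exists>t. t \<in> Hom A Y X \<and> cmp A s t = Id A Y)"

definition fully_invariant :: "('o, 'm) category \<Rightarrow> 'o \<Rightarrow> 'o \<Rightarrow> 'm \<Rightarrow> bool" where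
  "fully_invariant A K M i \<longleftrightarrow> mono A K M i \<and>
     (\<forall>h. h \<in> Hom A M M \<longrightarrow> (\<exists>\<alpha>. \<alpha> \<in> Hom A K K \<and> cmp A h i = cmp A i \<alpha>))"

definition fully_coinvariant :: "('o, 'm) category \<Rightarrow> 'o \<Rightarrow> 'o \<Rightarrow> 'm \<Rightarrow> bool" where
  "fully_coinvariant A M C d \<longleftrightarrow> epi A M C d \<and>
     (\<forall>h. h \<in> Hom A M M \<longrightarrow> (\<exists>\<beta>. \<beta> \<in> Hom A C C \<and> cmp A d h = cmp A \<beta> d))"

definition short_exact :: "('o, 'm) category \<Rightarrow> 'o \<Rightarrow> 'o \<Rightarrow> 'o \<Rightarrow> 'm \<Rightarrow> 'm \<Rightarrow> bool" where
  "short_exact A F M C i d \<longleftrightarrow> mono A F M i \<and> epi A M C d \<and> is_kernel A M C d F i"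

definition split_fi_ses :: "('o, 'm) category \<Rightarrow> 'o \<Rightarrow> 'o \<Rightarrow> 'o \<Rightarrow> 'm \<Rightarrow> 'm \<Rightarrow> bool" where
  "split_fi_ses A F M C i d \<longleftrightarrow> short_exact A F M C i d \<and> is_section A F M i \<and> fully_invariant A F M i"

definition self_F_split :: "('o, 'm) category \<Rightarrow> 'o \<Rightarrow> 'o \<Rightarrow> 'o \<Rightarrow> 'm \<Rightarrow> 'm \<Rightarrow> bool" where
  "self_F_split A F M C i d \<longleftrightarrow> (\<forall>g K k. g \<in> Hom A M M \<longrightarrow> is_kernel A M C (cmp A d g) K k \<longrightarrow>
      is_section A K M k)"

definition strongly_self_F_split :: "('o, 'm) category \<Rightarrow> 'o \<Rightarrow> 'o \<Rightarrow> 'o \<Rightarrow> 'm \<Rightarrow> 'm \<Rightarrow> bool" where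
  "strongly_self_F_split A F M C i d \<longleftrightarrow> (\<forall>g K k. g \<in> Hom A M M \<longrightarrow> is_kernel A M C (cmp A d g) K k \<longrightarrow>
      is_section A K M k \<and> fully_invariant A K M k)"

definition dual_self_F_split :: "('o, 'm) category \<Rightarrow> 'o \<Rightarrow> 'o \<Rightarrow> 'o \<Rightarrow> 'm \<Rightarrow> 'm \<Rightarrow> bool" where
  "dual_self_F_split A F M C i d \<longleftrightarrow> (\<forall>g Q q. g \<in> Hom A M M \<longrightarrow> is_cokernel A F M (cmp A g i) Q q \<longrightarrow>
      is_retraction A M Q q)"

definition dual_strongly_self_F_split :: "('o, 'm) category \<Rightarrow> 'o \<Rightarrow> 'o \<Rightarrow> 'o \<Rightarrow> 'm \<Rightarrow> 'm \<Rightarrow> bool" where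
  "dual_strongly_self_F_split A F M C i d \<longleftrightarrow> (\<forall>g Q q. g \<in> Hom A M M \<longrightarrow> is_cokernel A F M (cmp A g i) Q q \<longrightarrow>
      is_retraction A M Q q \<and> fully_coinvariant A M Q q)"

definition self_rickart :: "('o, 'm) category \<Rightarrow> 'o \<Rightarrow> bool" where
  "self_rickart A M \<longleftrightarrow> (\<forall>f K k. f \<in> Hom A M M \<longrightarrow> is_kernel A M M f K k \<longrightarrow> is_section A K M k)"

definition strongly_self_rickart :: "('o, 'm) category \<Rightarrow> 'o \<Rightarrow> bool" where
  "strongly_self_rickart A M \<longleftrightarrow> (\<forall>f K k. f \<in> Hom A M M \<longrightarrow> is_kernel A M M f K k \<longrightarrow>
      is_section A K M k \<and> fully_invariant A K M k)"

definition dual_self_rickart :: "('o, 'm) category \<Rightarrow> 'o \<Rightarrow> bool" where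
  "dual_self_rickart A M \<longleftrightarrow> (\<forall>f Q q. f \<in> Hom A M M \<longrightarrow> is_cokernel A M M f Q q \<longrightarrow> is_retraction A M Q q)"

definition dual_strongly_self_rickart :: "('o, 'm) category \<Rightarrow> 'o \<Rightarrow> bool" where
  "dual_strongly_self_rickart A M \<longleftrightarrow> (\<forall>f Q q. f \<in> Hom A M M \<longrightarrow> is_cokernel A M M f Q q \<longrightarrow>
      is_retraction A M Q q \<and> fully_coinvariant A M Q q)"

end

theory Submission
  imports Defs
begin

text \<open>For a split sequence with retraction t of i, the cokernel of g i is the cokernel of the
  endomorphism g i t; if moreover d has a section s, the kernel of d g is the kernel of the
  endomorphism s d g. This gives the forward implications. Conversely, the trivial sequences
  0 \<rightarrow> 0 \<rightarrow> M \<rightarrow> M \<rightarrow> 0 and 0 \<rightarrow> M \<rightarrow> M \<rightarrow> 0 \<rightarrow> 0 turn the self-F-split conditions back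
  into the self-Rickart ones. The abelian category carries no given additive structure, so
  d has to be split without writing 1 - i t: self-Rickartness makes the kernel k0 of i t a
  section, and full invariance of i yields a retraction of k0 that factors through d.\<close>

locale abelian_category =
  fixes A :: "('o, 'm) category"
  assumes abelian: "abelian A"
begin

lemma category: "is_category A"
  using abelian unfolding abelian_def by blast

lemma hom_obs: "f \<in> Hom A a b \<Longrightarrow> a \<in> Ob A \<and> b \<in> Ob A"
  using category unfolding is_category_def by metis

lemma id_hom: "a \<in> Ob A \<Longrightarrow> Id A a \<in> Hom A a a"
  using category unfolding is_category_def by metis

lemma comp_hom: "f \<in> Hom A a b \<Longrightarrow> g \<in> Hom A b c \<Longrightarrow> cmp A g f \<in> Hom A a c"
  using category unfolding is_category_def by metis

lemma comp_assoc:
  "f \<in> Hom A a b \<Longrightarrow> g \<in> Hom A b c \<Longrightarrow> h \<in> Hom A c d \<Longrightarrow>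
   cmp A h (cmp A g f) = cmp A (cmp A h g) f"
  using category unfolding is_category_def by metis

lemma comp_id_left: "f \<in> Hom A a b \<Longrightarrow> cmp A (Id A b) f = f"
  using category unfolding is_category_def by metis

lemma comp_id_right: "f \<in> Hom A a b \<Longrightarrow> cmp A f (Id A a) = f"
  using category unfolding is_category_def by metis

lemma zero_obj_ex: "\<exists>z. is_zero_obj A z"
  using abelian unfolding abelian_def by blast

lemma zero_obj_from_ex: "is_zero_obj A z \<Longrightarrow> a \<in> Ob A \<Longrightarrow> \<exists>f. f \<in> Hom A z a"
  unfolding is_zero_obj_def by blast

lemma zero_obj_to_ex: "is_zero_obj A z \<Longrightarrow> a \<in> Ob A \<Longrightarrow> \<exists>f. f \<in> Hom A a z"
  unfolding is_zero_obj_def by blast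

lemma zero_obj_from_unique:
  "is_zero_obj A z \<Longrightarrow> a \<in> Ob A \<Longrightarrow> f \<in> Hom A z a \<Longrightarrow> g \<in> Hom A z a \<Longrightarrow> f = g"
  unfolding is_zero_obj_def by blast

lemma zero_obj_to_unique:
  "is_zero_obj A z \<Longrightarrow> a \<in> Ob A \<Longrightarrow> f \<in> Hom A a z \<Longrightarrow> g \<in> Hom A a z \<Longrightarrow> f = g"
  unfolding is_zero_obj_def by blast

lemma zm_eq_comp_through_zero_obj:
  assumes z: "is_zero_obj A z" and u: "u \<in> Hom A a z" and v: "v \<in> Hom A z b"
  shows "zm A a b = cmp A v u"
  unfolding zm_def
proof (rule the_equality)
  show "cmp A v u \<in> Hom A a b \<and>
      (\<exists>z' u' v'. is_zero_obj A z' \<and> u' \<in> Hom A a z' \<and> v' \<in> Hom A z' b \<and> cmp A v u = cmp A v' u')"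
    using z u v comp_hom by blast
next
  fix h
  assume "h \<in> Hom A a b \<and>
      (\<exists>z' u' v'. is_zero_obj A z' \<and> u' \<in> Hom A a z' \<and> v' \<in> Hom A z' b \<and> h = cmp A v' u')"
  then obtain z' u' v' where z': "is_zero_obj A z'" and u': "u' \<in> Hom A a z'"
    and v': "v' \<in> Hom A z' b" and h: "h = cmp A v' u'" by blast
  have a: "a \<in> Ob A" and b: "b \<in> Ob A" and "z' \<in> Ob A" using hom_obs u v' by blast+
  then obtain w where w: "w \<in> Hom A z z'" using zero_obj_from_ex[OF z] by blast
  have "cmp A v' w = v" using zero_obj_from_unique[OF z b] comp_hom[OF w v'] v by blast
  moreover have "cmp A w u = u'" using zero_obj_to_unique[OF z' a] comp_hom[OF u w] u' by blast
  ultimately show "h = cmp A v u" using h comp_assoc[OF u w v'] by simp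
qed

lemma zm_hom:
  assumes "a \<in> Ob A" "b \<in> Ob A"
  shows "zm A a b \<in> Hom A a b"
proof -
  obtain z where z: "is_zero_obj A z" using zero_obj_ex by blast
  obtain u v where "u \<in> Hom A a z" and "v \<in> Hom A z b"
    using zero_obj_from_ex[OF z assms(2)] zero_obj_to_ex[OF z assms(1)] by blast
  then show ?thesis using zm_eq_comp_through_zero_obj[OF z] comp_hom by simp
qed

lemma comp_zm:
  assumes f: "f \<in> Hom A b c" and a: "a \<in> Ob A"
  shows "cmp A f (zm A a b) = zm A a c"
proof -
  obtain z where z: "is_zero_obj A z" using zero_obj_ex by blast
  obtain u v where u: "u \<in> Hom A a z" and v: "v \<in> Hom A z b"
    using zero_obj_from_ex[OF z] zero_obj_to_ex[OF z a] hom_obs[OF f] by blast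
  show ?thesis
    using zm_eq_comp_through_zero_obj[OF z u] v comp_hom[OF v f] comp_assoc[OF u v f] by simp
qed

lemma zm_comp:
  assumes f: "f \<in> Hom A a b" and c: "c \<in> Ob A"
  shows "cmp A (zm A b c) f = zm A a c"
proof -
  obtain z where z: "is_zero_obj A z" using zero_obj_ex by blast
  obtain u v where u: "u \<in> Hom A b z" and v: "v \<in> Hom A z c"
    using zero_obj_from_ex[OF z c] zero_obj_to_ex[OF z] hom_obs[OF f] by blast
  show ?thesis
    using zm_eq_comp_through_zero_obj[OF z _ v] u comp_hom[OF f u] comp_assoc[OF f u v] by simp
qed

lemma mono_cancel:
  "mono A a b f \<Longrightarrow> g \<in> Hom A x a \<Longrightarrow> h \<in> Hom A x a \<Longrightarrow> cmp A f g = cmp A f h \<Longrightarrow> g = h"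
  unfolding mono_def by blast

lemma epi_cancel:
  "epi A a b f \<Longrightarrow> g \<in> Hom A b x \<Longrightarrow> h \<in> Hom A b x \<Longrightarrow> cmp A g f = cmp A h f \<Longrightarrow> g = h"
  unfolding epi_def by blast

lemma section_mono:
  assumes "is_section A a b s"
  shows "mono A a b s"
proof -
  obtain r where s: "s \<in> Hom A a b" and r: "r \<in> Hom A b a" and rs: "cmp A r s = Id A a"
    using assms unfolding is_section_def by blast
  show ?thesis unfolding mono_def
  proof (intro conjI allI impI s)
    fix x g h assume g: "g \<in> Hom A x a" and h: "h \<in> Hom A x a" and e: "cmp A s g = cmp A s h"
    have "g = cmp A (cmp A r s) g" using comp_id_left[OF g] rs by simp
    also have "\<dots> = cmp A (cmp A r s) h" using comp_assoc[OF g s r] comp_assoc[OF h s r] e by simp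
    also have "\<dots> = h" using comp_id_left[OF h] rs by simp
    finally show "g = h" .
  qed
qed

lemma retraction_epi:
  assumes "is_retraction A a b s"
  shows "epi A a b s"
proof -
  obtain r where s: "s \<in> Hom A a b" and r: "r \<in> Hom A b a" and sr: "cmp A s r = Id A b"
    using assms unfolding is_retraction_def by blast
  show ?thesis unfolding epi_def
  proof (intro conjI allI impI s)
    fix x g h assume g: "g \<in> Hom A b x" and h: "h \<in> Hom A b x" and e: "cmp A g s = cmp A h s"
    have "g = cmp A g (cmp A s r)" using comp_id_right[OF g] sr by simp
    also have "\<dots> = cmp A h (cmp A s r)" using comp_assoc[OF r s g] comp_assoc[OF r s h] e by simp
    also have "\<dots> = h" using comp_id_right[OF h] sr by simp
    finally show "g = h" .
  qed
qed

lemma kernel_ex: "f \<in> Hom A a b \<Longrightarrow> \<exists>K k. is_kernel A a b f K k"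
  using abelian unfolding abelian_def by blast

lemma mono_is_kernel: "mono A a b f \<Longrightarrow> \<exists>c g. is_kernel A b c g a f"
  using abelian unfolding abelian_def by blast

lemma epi_is_cokernel: "epi A a b f \<Longrightarrow> \<exists>c g. is_cokernel A c a g b f"
  using abelian unfolding abelian_def by blast

lemma kernel_comp_mono:
  assumes K: "is_kernel A a b f K k" and m: "mono A b c m"
  shows "is_kernel A a c (cmp A m f) K k"
proof -
  have f: "f \<in> Hom A a b" and k: "k \<in> Hom A K a" and fk: "cmp A f k = zm A K b"
    using K unfolding is_kernel_def by blast+
  have mh: "m \<in> Hom A b c" using m unfolding mono_def by blast
  show ?thesis unfolding is_kernel_def
  proof (intro conjI allI impI comp_hom[OF f mh] k)
    show "cmp A (cmp A m f) k = zm A K c"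
      using comp_assoc[OF k f mh] fk comp_zm[OF mh] hom_obs[OF k] by simp
    fix X g assume g: "g \<in> Hom A X a" and e: "cmp A (cmp A m f) g = zm A X c"
    have X: "X \<in> Ob A" using hom_obs[OF g] by blast
    have "cmp A m (cmp A f g) = cmp A m (zm A X b)"
      using e comp_assoc[OF g f mh] comp_zm[OF mh X] by simp
    then have "cmp A f g = zm A X b"
      using mono_cancel[OF m comp_hom[OF g f] zm_hom] X hom_obs[OF f] by blast
    then show "\<exists>!u. u \<in> Hom A X K \<and> cmp A k u = g" using K g unfolding is_kernel_def by blast
  qed
qed

lemma cokernel_comp_epi:
  assumes Q: "is_cokernel A a b f Q q" and e: "epi A c a e"
  shows "is_cokernel A c b (cmp A f e) Q q"
proof -
  have f: "f \<in> Hom A a b" and q: "q \<in> Hom A b Q" and qf: "cmp A q f = zm A a Q"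
    using Q unfolding is_cokernel_def by blast+
  have eh: "e \<in> Hom A c a" using e unfolding epi_def by blast
  show ?thesis unfolding is_cokernel_def
  proof (intro conjI allI impI comp_hom[OF eh f] q)
    show "cmp A q (cmp A f e) = zm A c Q"
      using comp_assoc[OF eh f q] qf zm_comp[OF eh] hom_obs[OF q] by simp
    fix X g assume g: "g \<in> Hom A b X" and z: "cmp A g (cmp A f e) = zm A c X"
    have X: "X \<in> Ob A" using hom_obs[OF g] by blast
    have "cmp A (cmp A g f) e = cmp A (zm A a X) e"
      using z comp_assoc[OF eh f g] zm_comp[OF eh X] by simp
    then have "cmp A g f = zm A a X"
      using epi_cancel[OF e comp_hom[OF f g] zm_hom] X hom_obs[OF f] by blast
    then show "\<exists>!u. u \<in> Hom A Q X \<and> cmp A u q = g" using Q g unfolding is_cokernel_def by blast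
  qed
qed

text \<open>Without an additive structure, equality of x and y is reduced to a vanishing condition
  through their graphs: the graph of y is a mono, hence a kernel of some c, and the graph of x
  factors through it once c kills it.\<close>
lemma jointly_epi_if_detects_zero:
  assumes a: "a \<in> Hom A X M" and b: "b \<in> Hom A Y M"
    and detect: "\<And>Z c. c \<in> Hom A M Z \<Longrightarrow> cmp A c a = zm A X Z \<Longrightarrow> cmp A c b = zm A Y Z \<Longrightarrow>
        c = zm A M Z"
    and x: "x \<in> Hom A M C" and y: "y \<in> Hom A M C"
    and xa: "cmp A x a = cmp A y a" and xb: "cmp A x b = cmp A y b"
  shows "x = y"
proof -
  have M: "M \<in> Ob A" and C: "C \<in> Ob A" using hom_obs x by blast+
  have "has_products A" using abelian unfolding abelian_def by blast
  then obtain P p1 p2 where p1: "p1 \<in> Hom A P M" and p2: "p2 \<in> Hom A P C" and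
    pair: "\<forall>W f g. f \<in> Hom A W M \<longrightarrow> g \<in> Hom A W C \<longrightarrow>
        (\<exists>!u. u \<in> Hom A W P \<and> cmp A p1 u = f \<and> cmp A p2 u = g)"
    using M C unfolding has_products_def by blast
  have pair_eq: "u = v" if "u \<in> Hom A W P" "v \<in> Hom A W P"
    "cmp A p1 u = cmp A p1 v" "cmp A p2 u = cmp A p2 v" for W u v
  proof -
    have "\<exists>!w. w \<in> Hom A W P \<and> cmp A p1 w = cmp A p1 u \<and> cmp A p2 w = cmp A p2 u"
      using pair[rule_format, OF comp_hom[OF that(1) p1] comp_hom[OF that(1) p2]] .
    then show ?thesis using that by metis
  qed
  obtain gx where gx: "gx \<in> Hom A M P" "cmp A p1 gx = Id A M" "cmp A p2 gx = x"
    using pair[rule_format, OF id_hom[OF M] x] by blast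
  obtain gy where gy: "gy \<in> Hom A M P" "cmp A p1 gy = Id A M" "cmp A p2 gy = y"
    using pair[rule_format, OF id_hom[OF M] y] by blast
  have "mono A M P gy" using section_mono gy p1 unfolding is_section_def by blast
  then obtain Z c where c: "is_kernel A P Z c M gy" using mono_is_kernel by blast
  then have ch: "c \<in> Hom A P Z" and cgy: "cmp A c gy = zm A M Z"
    unfolding is_kernel_def by blast+
  have Z: "Z \<in> Ob A" using hom_obs[OF ch] by blast
  have graph_eq: "cmp A gx e = cmp A gy e" if e: "e \<in> Hom A W M" "cmp A x e = cmp A y e" for W e
    using pair_eq[OF comp_hom[OF e(1) gx(1)] comp_hom[OF e(1) gy(1)]]
      comp_assoc[OF e(1) gx(1) p1] comp_assoc[OF e(1) gy(1) p1]
      comp_assoc[OF e(1) gx(1) p2] comp_assoc[OF e(1) gy(1) p2] gx gy e(2) by simp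
  have kills: "cmp A (cmp A c gx) e = zm A W Z" if e: "e \<in> Hom A W M" "cmp A x e = cmp A y e" for W e
    using graph_eq[OF e] comp_assoc[OF e(1) gx(1) ch] comp_assoc[OF e(1) gy(1) ch]
      cgy zm_comp[OF e(1) Z] by simp
  have "cmp A c gx = zm A M Z"
    using detect[OF comp_hom[OF gx(1) ch]] kills[OF a xa] kills[OF b xb] by blast
  then obtain u where u: "u \<in> Hom A M M" and gyu: "cmp A gy u = gx"
    using c gx(1) unfolding is_kernel_def by blast
  have "u = Id A M" using gyu gx(2) gy(2) comp_assoc[OF u gy(1) p1] comp_id_left[OF u] by simp
  then have "gx = gy" using gyu comp_id_right[OF gy(1)] by simp
  then show ?thesis using gx gy by simp
qed

lemma zm_if_kills_section_and_complement:
  assumes t: "t \<in> Hom A M F" and i: "i \<in> Hom A F M" and ti: "cmp A t i = Id A F"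
    and k0: "is_kernel A M M (cmp A i t) K0 k0"
    and c: "c \<in> Hom A M Y" and ck0: "cmp A c k0 = zm A K0 Y" and ci: "cmp A c i = zm A F Y"
  shows "c = zm A M Y"
proof -
  have "is_retraction A M F t" using t i ti unfolding is_retraction_def by blast
  then obtain W w where tw: "is_cokernel A W M w F t" using retraction_epi epi_is_cokernel by blast
  then have w: "w \<in> Hom A W M" and tw0: "cmp A t w = zm A W F" unfolding is_cokernel_def by blast+
  have W: "W \<in> Ob A" and Y: "Y \<in> Ob A" using hom_obs w c by blast+
  have k0h: "k0 \<in> Hom A K0 M" using k0 unfolding is_kernel_def by blast
  have "cmp A (cmp A i t) w = zm A W M" using comp_assoc[OF w t i] tw0 comp_zm[OF i W] by simp
  then obtain v where v: "v \<in> Hom A W K0" and k0v: "cmp A k0 v = w"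
    using k0 w unfolding is_kernel_def by blast
  have "cmp A c w = zm A W Y" using k0v comp_assoc[OF v k0h c] ck0 zm_comp[OF v Y] by simp
  then obtain c' where c': "c' \<in> Hom A F Y" and c't: "cmp A c' t = c"
    using tw c unfolding is_cokernel_def by blast
  have "c' = zm A F Y" using ci c't comp_assoc[OF i t c'] ti comp_id_right[OF c'] by simp
  then show ?thesis using c't zm_comp[OF t Y] by simp
qed

lemma factor_through_epi:
  assumes d: "epi A M C d" and K: "is_kernel A M C d F i"
    and h: "h \<in> Hom A M X" and hi: "cmp A h i = zm A F X"
  shows "\<exists>u. u \<in> Hom A C X \<and> cmp A u d = h"
proof -
  obtain W w where dw: "is_cokernel A W M w C d" using epi_is_cokernel[OF d] by blast
  then have w: "w \<in> Hom A W M" and dw0: "cmp A d w = zm A W C"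
    unfolding is_cokernel_def by blast+
  obtain v where v: "v \<in> Hom A W F" and iv: "cmp A i v = w"
    using K w dw0 unfolding is_kernel_def by blast
  have i: "i \<in> Hom A F M" using K unfolding is_kernel_def by blast
  have "cmp A h w = zm A W X"
    using iv comp_assoc[OF v i h] hi zm_comp[OF v] hom_obs[OF h] by simp
  then show ?thesis using dw h unfolding is_cokernel_def by blast
qed

text \<open>Full invariance gives k0 r i = i \<alpha>; applying t, which kills k0, forces \<alpha> = 0.\<close>
lemma complement_retraction_kills_fully_invariant:
  assumes fi: "fully_invariant A F M i" and t: "t \<in> Hom A M F" and ti: "cmp A t i = Id A F"
    and k0: "is_kernel A M M (cmp A i t) K0 k0"
    and r: "r \<in> Hom A M K0" and rk0: "cmp A r k0 = Id A K0"
  shows "cmp A r i = zm A F K0"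
proof -
  have mi: "mono A F M i" using fi unfolding fully_invariant_def by blast
  have i: "i \<in> Hom A F M" using mi unfolding mono_def by blast
  have k0h: "k0 \<in> Hom A K0 M" and itk0: "cmp A (cmp A i t) k0 = zm A K0 M"
    using k0 unfolding is_kernel_def by blast+
  have F: "F \<in> Ob A" and K0: "K0 \<in> Ob A" using hom_obs i k0h by blast+
  have "cmp A i (cmp A t k0) = cmp A i (zm A K0 F)"
    using comp_assoc[OF k0h t i] itk0 comp_zm[OF i K0] by simp
  then have tk0: "cmp A t k0 = zm A K0 F"
    using mono_cancel[OF mi comp_hom[OF k0h t] zm_hom[OF K0 F]] by blast
  have ri: "cmp A r i \<in> Hom A F K0" using comp_hom[OF i r] .
  obtain \<alpha> where \<alpha>: "\<alpha> \<in> Hom A F F" and k0ri: "cmp A (cmp A k0 r) i = cmp A i \<alpha>"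
    using fi comp_hom[OF r k0h] unfolding fully_invariant_def by blast
  have "\<alpha> = cmp A t (cmp A i \<alpha>)" using comp_assoc[OF \<alpha> i t] ti comp_id_left[OF \<alpha>] by simp
  also have "\<dots> = cmp A (cmp A t k0) (cmp A r i)"
    using k0ri comp_assoc[OF i r k0h] comp_assoc[OF ri k0h t] by simp
  also have "\<dots> = zm A F F" using tk0 zm_comp[OF ri F] by simp
  finally have "cmp A k0 (cmp A r i) = cmp A k0 (zm A F K0)"
    using k0ri comp_assoc[OF i r k0h] comp_zm[OF i F] comp_zm[OF k0h F] by simp
  moreover have "mono A K0 M k0"
    using section_mono r k0h rk0 unfolding is_section_def by blast
  ultimately show ?thesis using mono_cancel ri zm_hom[OF F K0] by blast
qed

lemma split_fi_ses_retraction: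
  assumes R: "self_rickart A M" and S: "split_fi_ses A F M C i d"
  shows "is_retraction A M C d"
proof -
  have ed: "epi A M C d" and kd: "is_kernel A M C d F i"
    and si: "is_section A F M i" and fi: "fully_invariant A F M i"
    using S unfolding split_fi_ses_def short_exact_def by blast+
  have i: "i \<in> Hom A F M" and d: "d \<in> Hom A M C" and di: "cmp A d i = zm A F C"
    using kd unfolding is_kernel_def by blast+
  have F: "F \<in> Ob A" and C: "C \<in> Ob A" using hom_obs i d by blast+
  obtain t where t: "t \<in> Hom A M F" and ti: "cmp A t i = Id A F"
    using si unfolding is_section_def by blast
  obtain K0 k0 where k0: "is_kernel A M M (cmp A i t) K0 k0"
    using kernel_ex comp_hom[OF t i] by blast
  have k0h: "k0 \<in> Hom A K0 M" using k0 unfolding is_kernel_def by blast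
  obtain r where r: "r \<in> Hom A M K0" and rk0: "cmp A r k0 = Id A K0"
    using R comp_hom[OF t i] k0 unfolding self_rickart_def is_section_def by blast
  have ri: "cmp A r i = zm A F K0"
    using complement_retraction_kills_fully_invariant[OF fi t ti k0 r rk0] .
  then obtain \<rho> where \<rho>: "\<rho> \<in> Hom A C K0" and \<rho>d: "cmp A \<rho> d = r"
    using factor_through_epi[OF ed kd r] by blast
  have dk0: "cmp A d k0 \<in> Hom A K0 C" using comp_hom[OF k0h d] .
  have dk0r: "cmp A (cmp A d k0) r = d"
  proof (rule jointly_epi_if_detects_zero[OF k0h i _ comp_hom[OF r dk0] d])
    show "c = zm A M Z" if "c \<in> Hom A M Z" "cmp A c k0 = zm A K0 Z" "cmp A c i = zm A F Z" for Z c
      using zm_if_kills_section_and_complement[OF t i ti k0] that by blast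
    show "cmp A (cmp A (cmp A d k0) r) k0 = cmp A d k0"
      using comp_assoc[OF k0h r dk0] rk0 comp_id_right[OF dk0] by simp
    show "cmp A (cmp A (cmp A d k0) r) i = cmp A d i"
      using comp_assoc[OF i r dk0] ri comp_zm[OF dk0 F] di by simp
  qed
  have s: "cmp A k0 \<rho> \<in> Hom A C M" using comp_hom[OF \<rho> k0h] .
  have "cmp A (cmp A d (cmp A k0 \<rho>)) d = cmp A (Id A C) d"
    using comp_assoc[OF d \<rho> dk0] comp_assoc[OF \<rho> k0h d] \<rho>d dk0r comp_id_left[OF d] by simp
  then have "cmp A d (cmp A k0 \<rho>) = Id A C"
    using epi_cancel[OF ed comp_hom[OF s d] id_hom[OF C]] by blast
  then show ?thesis using d s unfolding is_retraction_def by blast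
qed

lemma split_fi_ses_kernel_is_endo_kernel:
  assumes R: "self_rickart A M" and S: "split_fi_ses A F M C i d"
    and g: "g \<in> Hom A M M" and K: "is_kernel A M C (cmp A d g) K k"
  shows "\<exists>f. f \<in> Hom A M M \<and> is_kernel A M M f K k"
proof -
  obtain s where d: "d \<in> Hom A M C" and s: "s \<in> Hom A C M" and ds: "cmp A d s = Id A C"
    using split_fi_ses_retraction[OF R S] unfolding is_retraction_def by blast
  have "mono A C M s" using section_mono d s ds unfolding is_section_def by blast
  then show ?thesis using kernel_comp_mono[OF K] comp_hom[OF comp_hom[OF g d] s] by blast
qed

lemma split_fi_ses_cokernel_is_endo_cokernel:
  assumes S: "split_fi_ses A F M C i d"
    and g: "g \<in> Hom A M M" and Q: "is_cokernel A F M (cmp A g i) Q q"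
  shows "\<exists>f. f \<in> Hom A M M \<and> is_cokernel A M M f Q q"
proof -
  obtain t where i: "i \<in> Hom A F M" and t: "t \<in> Hom A M F" and ti: "cmp A t i = Id A F"
    using S unfolding split_fi_ses_def is_section_def by blast
  have "epi A M F t" using retraction_epi t i ti unfolding is_retraction_def by blast
  then show ?thesis using cokernel_comp_epi[OF Q] comp_hom[OF t comp_hom[OF i g]] by blast
qed

lemma split_fi_ses_zero_left:
  assumes z: "is_zero_obj A z" and i: "i \<in> Hom A z M"
  shows "split_fi_ses A z M M i (Id A M)"
proof -
  have M: "M \<in> Ob A" and Z: "z \<in> Ob A" using hom_obs i by blast+
  have idM: "Id A M \<in> Hom A M M" using id_hom[OF M] .
  have mi: "mono A z M i" unfolding mono_def using i zero_obj_to_unique[OF z] hom_obs by blast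
  have ed: "epi A M M (Id A M)" unfolding epi_def using idM comp_id_right by metis
  have zi: "zm A z M = i" using zm_eq_comp_through_zero_obj[OF z id_hom[OF Z] i] comp_id_right[OF i] by simp
  have kd: "is_kernel A M M (Id A M) z i" unfolding is_kernel_def
  proof (intro conjI allI impI idM i)
    show "cmp A (Id A M) i = zm A z M" using comp_id_left[OF i] zi by simp
    fix X g assume g: "g \<in> Hom A X M" and e: "cmp A (Id A M) g = zm A X M"
    have X: "X \<in> Ob A" using hom_obs g by blast
    obtain u where u: "u \<in> Hom A X z" using zero_obj_to_ex[OF z X] by blast
    have "cmp A i u = g" using zm_eq_comp_through_zero_obj[OF z u i] e comp_id_left[OF g] by simp
    then show "\<exists>!u. u \<in> Hom A X z \<and> cmp A i u = g" using u zero_obj_to_unique[OF z X] by blast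
  qed
  obtain t where t: "t \<in> Hom A M z" using zero_obj_to_ex[OF z M] by blast
  have si: "is_section A z M i" unfolding is_section_def
    using i t comp_hom[OF i t] id_hom[OF Z] zero_obj_to_unique[OF z Z] by blast
  have fi: "fully_invariant A z M i" unfolding fully_invariant_def
  proof (intro conjI allI impI mi)
    fix h assume h: "h \<in> Hom A M M"
    show "\<exists>\<alpha>. \<alpha> \<in> Hom A z z \<and> cmp A h i = cmp A i \<alpha>"
      using zero_obj_from_unique[OF z M comp_hom[OF i h] comp_hom[OF id_hom[OF Z] i]] id_hom[OF Z]
      by blast
  qed
  show ?thesis unfolding split_fi_ses_def short_exact_def using mi ed kd si fi by blast
qed

lemma split_fi_ses_zero_right:
  assumes z: "is_zero_obj A z" and d: "d \<in> Hom A M z"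
  shows "split_fi_ses A M M z (Id A M) d"
proof -
  have M: "M \<in> Ob A" and Z: "z \<in> Ob A" using hom_obs d by blast+
  have idM: "Id A M \<in> Hom A M M" using id_hom[OF M] .
  have mi: "mono A M M (Id A M)" unfolding mono_def using idM comp_id_left by metis
  have ed: "epi A M z d" unfolding epi_def using d zero_obj_from_unique[OF z] hom_obs by blast
  have kd: "is_kernel A M z d M (Id A M)" unfolding is_kernel_def
  proof (intro conjI allI impI idM d)
    show "cmp A d (Id A M) = zm A M z"
      using comp_id_right[OF d] zero_obj_to_unique[OF z M d zm_hom[OF M Z]] by simp
    fix X g assume "g \<in> Hom A X M"
    then show "\<exists>!u. u \<in> Hom A X M \<and> cmp A (Id A M) u = g" using comp_id_left by metis
  qed
  have si: "is_section A M M (Id A M)" unfolding is_section_def using idM comp_id_left by metis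
  have fi: "fully_invariant A M M (Id A M)" unfolding fully_invariant_def
    using mi comp_id_left comp_id_right by metis
  show ?thesis unfolding split_fi_ses_def short_exact_def using mi ed kd si fi by blast
qed

lemma ex_split_fi_ses_zero_left: "M \<in> Ob A \<Longrightarrow> \<exists>z i. split_fi_ses A z M M i (Id A M)"
  using zero_obj_ex zero_obj_from_ex split_fi_ses_zero_left by metis

lemma ex_split_fi_ses_zero_right: "M \<in> Ob A \<Longrightarrow> \<exists>z d. split_fi_ses A M M z (Id A M) d"
  using zero_obj_ex zero_obj_to_ex split_fi_ses_zero_right by metis

lemma self_rickart_iff_self_F_split:
  assumes M: "M \<in> Ob A"
  shows "self_rickart A M \<longleftrightarrow>
    (\<forall>F C i d. split_fi_ses A F M C i d \<longrightarrow> self_F_split A F M C i d)"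
proof
  assume R: "self_rickart A M"
  show "\<forall>F C i d. split_fi_ses A F M C i d \<longrightarrow> self_F_split A F M C i d"
    unfolding self_F_split_def
    using R split_fi_ses_kernel_is_endo_kernel[OF R] unfolding self_rickart_def by blast
next
  assume "\<forall>F C i d. split_fi_ses A F M C i d \<longrightarrow> self_F_split A F M C i d"
  then obtain z i where "self_F_split A z M M i (Id A M)"
    using ex_split_fi_ses_zero_left[OF M] by blast
  then show "self_rickart A M"
    unfolding self_F_split_def self_rickart_def using comp_id_left by metis
qed

lemma strongly_self_rickart_iff_strongly_self_F_split:
  assumes M: "M \<in> Ob A"
  shows "strongly_self_rickart A M \<longleftrightarrow>
    (\<forall>F C i d. split_fi_ses A F M C i d \<longrightarrow> strongly_self_F_split A F M C i d)"
proof
  assume R: "strongly_self_rickart A M"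
  then have "self_rickart A M" unfolding strongly_self_rickart_def self_rickart_def by blast
  then show "\<forall>F C i d. split_fi_ses A F M C i d \<longrightarrow> strongly_self_F_split A F M C i d"
    unfolding strongly_self_F_split_def
    using R split_fi_ses_kernel_is_endo_kernel unfolding strongly_self_rickart_def by blast
next
  assume "\<forall>F C i d. split_fi_ses A F M C i d \<longrightarrow> strongly_self_F_split A F M C i d"
  then obtain z i where "strongly_self_F_split A z M M i (Id A M)"
    using ex_split_fi_ses_zero_left[OF M] by blast
  then show "strongly_self_rickart A M"
    unfolding strongly_self_F_split_def strongly_self_rickart_def using comp_id_left by metis
qed

lemma dual_self_rickart_iff_dual_self_F_split:
  assumes M: "M \<in> Ob A"
  shows "dual_self_rickart A M \<longleftrightarrow>
    (\<forall>F C i d. split_fi_ses A F M C i d \<longrightarrow> dual_self_F_split A F M C i d)"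
proof
  assume R: "dual_self_rickart A M"
  show "\<forall>F C i d. split_fi_ses A F M C i d \<longrightarrow> dual_self_F_split A F M C i d"
    unfolding dual_self_F_split_def
    using R split_fi_ses_cokernel_is_endo_cokernel unfolding dual_self_rickart_def by blast
next
  assume "\<forall>F C i d. split_fi_ses A F M C i d \<longrightarrow> dual_self_F_split A F M C i d"
  then obtain z d where "dual_self_F_split A M M z (Id A M) d"
    using ex_split_fi_ses_zero_right[OF M] by blast
  then show "dual_self_rickart A M"
    unfolding dual_self_F_split_def dual_self_rickart_def using comp_id_right by metis
qed

lemma dual_strongly_self_rickart_iff_dual_strongly_self_F_split:
  assumes M: "M \<in> Ob A"
  shows "dual_strongly_self_rickart A M \<longleftrightarrow>
    (\<forall>F C i d. split_fi_ses A F M C i d \<longrightarrow> dual_strongly_self_F_split A F M C i d)"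
proof
  assume R: "dual_strongly_self_rickart A M"
  show "\<forall>F C i d. split_fi_ses A F M C i d \<longrightarrow> dual_strongly_self_F_split A F M C i d"
    unfolding dual_strongly_self_F_split_def
    using R split_fi_ses_cokernel_is_endo_cokernel unfolding dual_strongly_self_rickart_def by blast
next
  assume "\<forall>F C i d. split_fi_ses A F M C i d \<longrightarrow> dual_strongly_self_F_split A F M C i d"
  then obtain z d where "dual_strongly_self_F_split A M M z (Id A M) d"
    using ex_split_fi_ses_zero_right[OF M] by blast
  then show "dual_strongly_self_rickart A M"
    unfolding dual_strongly_self_F_split_def dual_strongly_self_rickart_def using comp_id_right by metis
qed

end

theorem corollary4p4:
  fixes A :: "('o, 'm) category" and M :: 'o
  assumes "abelian A" and "M \<in> Ob A"
  shows "(self_rickart A M \<longleftrightarrow>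
           (\<forall>F C i d. split_fi_ses A F M C i d \<longrightarrow> self_F_split A F M C i d))
       \<and> (strongly_self_rickart A M \<longleftrightarrow>
           (\<forall>F C i d. split_fi_ses A F M C i d \<longrightarrow> strongly_self_F_split A F M C i d))
       \<and> (dual_self_rickart A M \<longleftrightarrow>
           (\<forall>F C i d. split_fi_ses A F M C i d \<longrightarrow> dual_self_F_split A F M C i d))
       \<and> (dual_strongly_self_rickart A M \<longleftrightarrow>
           (\<forall>F C i d. split_fi_ses A F M C i d \<longrightarrow> dual_strongly_self_F_split A F M C i d))"
proof -
  interpret abelian_category A using assms(1) by unfold_locales
  show ?thesis
    using self_rickart_iff_self_F_split[OF assms(2)]
      strongly_self_rickart_iff_strongly_self_F_split[OF assms(2)]
      dual_self_rickart_iff_dual_self_F_split[OF assms(2)]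
      dual_strongly_self_rickart_iff_dual_strongly_self_F_split[OF assms(2)]
    by blast
qed

end
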